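(* Let $n\ge 1$ be a natural number and let $\Re_{n+1}$ denote the space of real $(n+1)\times(n+1)$ matrices $(a_{ij})$ with indices $0\le i,j\le n$. Then the set $bell(n)\subseteq\Re_{n+1}$ is convex, and $$q(n)\supseteq bell(n)\supseteq c(n).$$
   Context: $bell(n)$ is the set of all $(p_{ij})\in\Re_{n+1}$ such that $p_{00}=1$ and there exist a finite-dimensional Hilbert space $H$, projections $E_1,\dots,E_n,F_1,\dots,F_n$ on $H$, and a density operator (statistical operator) $W$ on $H\otimes H$ with $p_{i0}=\mathrm{tr}[W(E_i\otimes I)]$, $p_{0j}=\mathrm{tr}[W(I\otimes F_j)]$, $p_{ij}=\mathrm{tr}[W(E_i\otimes F_j)]$ for $i,j=1,\dots,n$ ($I$ the identity on $H$). $c(n)$ is the set of all $(p_{ij})\in\Re_{n+1}$ such that $p_{00}=1$ and there exist a probability space $(X,\Sigma,\mu)$ and events $A_1,\dots,A_n,B_1,\dots,B_n\in\Sigma$ with $p_{i0}=\mu(A_i)$, $p_{0j}=\mu(B_j)$, $p_{ij}=\mu(A_i\cap B_j)$ for $i,j=1,\dots,n$. $q(n)$ is the set of all $(p_{ij})\in\Re_{n+1}$ such that $p_{00}=1$ and there exist a Hilbert space $H$, projections $E_1,\dots,E_n,F_1,\dots,F_n$ on $H$ (not necessarily commuting), and a density operator $W$ on $H$ with $p_{i0}=\mathrm{tr}(WE_i)$, $p_{0j}=\mathrm{tr}(WF_j)$, $p_{ij}=\mathrm{tr}[W(E_i\wedge F_j)]$ for $i,j=1,\dots,n$, where $E_i\wedge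 F_j$ is the projection onto $E_i(H)\cap F_j(H)$. *)

theory Defs
  imports "Jordan_Normal_Form.Matrix" "HOL-Probability.Probability"
begin

text \<open>A finite-dimensional complex Hilbert space H is represented as C^d (d = dim H),
  operators on H as complex d x d matrices.\<close>

definition mtrace :: "complex mat \<Rightarrow> complex" where
  "mtrace A = (\<Sum>i<dim_row A. A $$ (i, i))"

definition adj :: "complex mat \<Rightarrow> complex mat" where
  "adj A = Matrix.mat (dim_col A) (dim_row A) (\<lambda>(i, j). cnj (A $$ (j, i)))"

definition kron :: "complex mat \<Rightarrow> complex mat \<Rightarrow> complex mat" where
  "kron A B = Matrix.mat (dim_row A * dim_row B) (dim_col A * dim_col B)
     (\<lambda>(i, j). A $$ (i div dim_row B, j div dim_col B) * B $$ (i mod dim_row B, j mod dim_col B))"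

definition is_proj :: "nat \<Rightarrow> complex mat \<Rightarrow> bool" where
  "is_proj d P \<longleftrightarrow> P \<in> carrier_mat d d \<and> P * P = P \<and> adj P = P"

definition is_density :: "nat \<Rightarrow> complex mat \<Rightarrow> bool" where
  "is_density d W \<longleftrightarrow> W \<in> carrier_mat d d
     \<and> (\<forall>v \<in> carrier_vec d. Im ((W *\<^sub>v v) \<bullet>c v) = 0 \<and> Re ((W *\<^sub>v v) \<bullet>c v) \<ge> 0)
     \<and> mtrace W = 1"

text \<open>E \<wedge> F: the projection onto E(H) \<inter> F(H) (range of a projection = its fixed vectors).\<close>
definition proj_meet :: "nat \<Rightarrow> complex mat \<Rightarrow> complex mat \<Rightarrow> complex mat" where
  "proj_meet d E F = (THE R. is_proj d R \<and>
     (\<forall>v \<in> carrier_vec d. R *\<^sub>v v = v \<longleftrightarrow> (E *\<^sub>v v = v \<and> F *\<^sub>v v = v)))"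

definition bell :: "nat \<Rightarrow> real mat set" where
  "bell n = {p \<in> carrier_mat (n+1) (n+1). p $$ (0, 0) = 1 \<and>
     (\<exists>d E F W. (\<forall>i\<in>{1..n}. is_proj d (E i) \<and> is_proj d (F i)) \<and> is_density (d * d) W \<and>
        (\<forall>i\<in>{1..n}. complex_of_real (p $$ (i, 0)) = mtrace (W * kron (E i) (1\<^sub>m d))) \<and>
        (\<forall>j\<in>{1..n}. complex_of_real (p $$ (0, j)) = mtrace (W * kron (1\<^sub>m d) (F j))) \<and>
        (\<forall>i\<in>{1..n}. \<forall>j\<in>{1..n}. complex_of_real (p $$ (i, j)) = mtrace (W * kron (E i) (F j))))}"

text \<open>c(n), where the probability space ranges over measures on the type 'a.\<close>
definition cset :: "nat \<Rightarrow> 'a itself \<Rightarrow> real mat set" where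
  "cset n _ = {p \<in> carrier_mat (n+1) (n+1). p $$ (0, 0) = 1 \<and>
     (\<exists>(M :: 'a measure) A B. prob_space M \<and> (\<forall>i\<in>{1..n}. A i \<in> sets M \<and> B i \<in> sets M) \<and>
        (\<forall>i\<in>{1..n}. p $$ (i, 0) = measure M (A i)) \<and>
        (\<forall>j\<in>{1..n}. p $$ (0, j) = measure M (B j)) \<and>
        (\<forall>i\<in>{1..n}. \<forall>j\<in>{1..n}. p $$ (i, j) = measure M (A i \<inter> B j)))}"

definition qset :: "nat \<Rightarrow> real mat set" where
  "qset n = {p \<in> carrier_mat (n+1) (n+1). p $$ (0, 0) = 1 \<and>
     (\<exists>d E F W. (\<forall>i\<in>{1..n}. is_proj d (E i) \<and> is_proj d (F i)) \<and> is_density d W \<and>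
        (\<forall>i\<in>{1..n}. complex_of_real (p $$ (i, 0)) = mtrace (W * E i)) \<and>
        (\<forall>j\<in>{1..n}. complex_of_real (p $$ (0, j)) = mtrace (W * F j)) \<and>
        (\<forall>i\<in>{1..n}. \<forall>j\<in>{1..n}. complex_of_real (p $$ (i, j)) = mtrace (W * proj_meet d (E i) (F j))))}"

definition convex_mat_set :: "real mat set \<Rightarrow> bool" where
  "convex_mat_set S \<longleftrightarrow> (\<forall>p\<in>S. \<forall>q\<in>S. \<forall>t::real. 0 \<le> t \<and> t \<le> 1 \<longrightarrow> t \<cdot>\<^sub>m p + (1 - t) \<cdot>\<^sub>m q \<in> S)"

end

theory Submission
  imports Defs
begin

text \<open>
  \<open>bell(n) \<subseteq> q(n)\<close>: the projections \<open>E \<otimes> I\<close> and \<open>I \<otimes> F\<close> commute, so their meet is their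
  product \<open>E \<otimes> F\<close>.

  Convexity: models on \<open>\<complex>\<^sup>d\<^sup>1\<close> and \<open>\<complex>\<^sup>d\<^sup>2\<close> are combined on \<open>\<complex>\<^sup>d\<^sup>1 \<oplus> \<complex>\<^sup>d\<^sup>2\<close> by
  block-diagonal projections and the state \<open>t W\<^sub>1 \<oplus> (1 - t) W\<^sub>2\<close>, placed on the blocks
  \<open>\<complex>\<^sup>d\<^sup>1 \<otimes> \<complex>\<^sup>d\<^sup>1\<close> and \<open>\<complex>\<^sup>d\<^sup>2 \<otimes> \<complex>\<^sup>d\<^sup>2\<close> of the tensor square through the coordinate isometries.
  Compressing the block-diagonal operators back along these isometries recovers the original
  ones, so every trace splits into the corresponding convex combination.

  \<open>c(n) \<subseteq> bell(n)\<close>: a classical model is the mixture, weighted by the probabilities of the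
  atoms generated by the events, of deterministic models, each of which is realised on \<open>\<complex>\<^sup>1\<close>.
\<close>


section \<open>Traces, adjoints and Kronecker products\<close>

lemma sum_lessThan_mult:
  "(\<Sum>k<m * n. f k) = (\<Sum>a<m. \<Sum>b<n. f (a * n + b :: nat))"
proof -
  have "(\<Sum>k<m * n. f k) = (\<Sum>a<m. sum f {a * n..<a * n + n})"
    using sum.nat_group[of f n m] by (simp add: mult.commute)
  also have "\<dots> = (\<Sum>a<m. \<Sum>b<n. f (a * n + b))"
    by (simp add: sum.atLeastLessThan_shift_0 atLeast0LessThan)
  finally show ?thesis .
qed

lemma less_mult_div_mod:
  fixes i k :: nat
  assumes "i < m * k" shows "i div k < m" "i mod k < k"
  using assms by (auto simp: less_mult_imp_div_less intro!: mod_less_divisor gr0I)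

lemma mult_add_less_mult:
  fixes a b m n :: nat
  assumes "a < m" "b < n" shows "a * n + b < m * n"
proof -
  have "a * n + b < (a + 1) * n" using assms(2) by simp
  also have "\<dots> \<le> m * n" using assms(1) by (intro mult_right_mono) auto
  finally show ?thesis .
qed

lemma mtrace_mult_comm:
  assumes "A \<in> carrier_mat n m" "B \<in> carrier_mat m n"
  shows "mtrace (A * B) = mtrace (B * A)"
  using assms
  by (simp add: mtrace_def scalar_prod_def atLeast0LessThan sum_distrib_left mult.commute
      sum.swap[of _ "{..<n}"])

lemma mtrace_add:
  assumes "A \<in> carrier_mat n n" "B \<in> carrier_mat n n"
  shows "mtrace (A + B) = mtrace A + mtrace B"
  using assms by (simp add: mtrace_def sum.distrib)

lemma mtrace_smult: "A \<in> carrier_mat n n \<Longrightarrow> mtrace (c \<cdot>\<^sub>m A) = c * mtrace A"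
  by (simp add: mtrace_def sum_distrib_left)

lemma mtrace_lincomb_mult:
  fixes X Y Z :: "complex mat"
  assumes "X \<in> carrier_mat n n" "Y \<in> carrier_mat n n" "Z \<in> carrier_mat n n"
  shows "mtrace ((a \<cdot>\<^sub>m X + b \<cdot>\<^sub>m Y) * Z) = a * mtrace (X * Z) + b * mtrace (Y * Z)"
  using assms by (simp add: mtrace_def scalar_prod_def distrib_left sum.distrib sum_distrib_left mult_ac)

lemma adj_carrier[simp]: "dim_row (adj A) = dim_col A" "dim_col (adj A) = dim_row A"
  by (auto simp: adj_def)

lemma adj_carrier_mat[simp]: "A \<in> carrier_mat n m \<Longrightarrow> adj A \<in> carrier_mat m n"
  by (auto simp: adj_def)

lemma index_adj[simp]: "i < dim_col A \<Longrightarrow> j < dim_row A \<Longrightarrow> adj A $$ (i, j) = cnj (A $$ (j, i))"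
  by (simp add: adj_def)

lemma adj_mult:
  assumes "A \<in> carrier_mat n m" "B \<in> carrier_mat m k"
  shows "adj (A * B) = adj B * adj A"
  by (rule eq_matI) (use assms in \<open>auto simp: scalar_prod_def mult.commute\<close>)

lemma adj_one[simp]: "adj (1\<^sub>m n) = 1\<^sub>m n"
  by (rule eq_matI) auto

lemma scalar_prod_adj:
  assumes "A \<in> carrier_mat n m" "x \<in> carrier_vec m" "y \<in> carrier_vec n"
  shows "(A *\<^sub>v x) \<bullet>c y = x \<bullet>c (adj A *\<^sub>v y)"
  using assms
  by (simp add: scalar_prod_def sum_distrib_left sum_distrib_right mult_ac sum.swap[of _ "{0..<n}"])

lemma quadratic_form_lincomb:
  fixes A B :: "complex mat"
  assumes "A \<in> carrier_mat n n" "B \<in> carrier_mat n n" "v \<in> carrier_vec n"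
  shows "((a \<cdot>\<^sub>m A + b \<cdot>\<^sub>m B) *\<^sub>v v) \<bullet>c v = a * ((A *\<^sub>v v) \<bullet>c v) + b * ((B *\<^sub>v v) \<bullet>c v)"
  using assms by (simp add: scalar_prod_def sum.distrib sum_distrib_left distrib_left distrib_right mult_ac)

lemma kron_carrier_mat[simp]:
  "kron A B \<in> carrier_mat (dim_row A * dim_row B) (dim_col A * dim_col B)"
  "dim_row (kron A B) = dim_row A * dim_row B"
  "dim_col (kron A B) = dim_col A * dim_col B"
  by (auto simp: kron_def)

lemma index_kron:
  "i < dim_row A * dim_row B \<Longrightarrow> j < dim_col A * dim_col B \<Longrightarrow>
   kron A B $$ (i, j) = A $$ (i div dim_row B, j div dim_col B) * B $$ (i mod dim_row B, j mod dim_col B)"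
  by (simp add: kron_def)

lemma kron_mult:
  assumes "A \<in> carrier_mat m m'" "C \<in> carrier_mat m' m''"
    and "B \<in> carrier_mat k k'" "D \<in> carrier_mat k' k''"
  shows "kron A B * kron C D = kron (A * C) (B * D)"
proof (rule eq_matI)
  fix i j assume "i < dim_row (kron (A * C) (B * D))" "j < dim_col (kron (A * C) (B * D))"
  then have i: "i < m * k" and j: "j < m'' * k''" using assms by auto
  have "(kron A B * kron C D) $$ (i, j) = (\<Sum>l<m' * k'. kron A B $$ (i, l) * kron C D $$ (l, j))"
    using assms i j by (simp add: scalar_prod_def atLeast0LessThan)
  also have "\<dots> = (\<Sum>a<m'. \<Sum>b<k'. (A $$ (i div k, a) * C $$ (a, j div k'')) *
                                      (B $$ (i mod k, b) * D $$ (b, j mod k'')))"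
    unfolding sum_lessThan_mult
  proof (intro sum.cong refl)
    fix a b assume "a \<in> {..<m'}" "b \<in> {..<k'}"
    then have "a * k' + b < m' * k'" by (simp add: mult_add_less_mult)
    then show "kron A B $$ (i, a * k' + b) * kron C D $$ (a * k' + b, j) =
      A $$ (i div k, a) * C $$ (a, j div k'') * (B $$ (i mod k, b) * D $$ (b, j mod k''))"
      using assms i j \<open>b \<in> {..<k'}\<close> by (simp add: index_kron mult_ac)
  qed
  also have "\<dots> = kron (A * C) (B * D) $$ (i, j)"
    using assms i j less_mult_div_mod[OF i] less_mult_div_mod[OF j]
    by (simp add: index_kron scalar_prod_def atLeast0LessThan sum_product)
  finally show "(kron A B * kron C D) $$ (i, j) = kron (A * C) (B * D) $$ (i, j)" .
qed (use assms in auto)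

lemma adj_kron: "adj (kron A B) = kron (adj A) (adj B)"
  by (rule eq_matI) (auto simp: index_kron less_mult_div_mod)

lemma kron_one: "kron (1\<^sub>m m) (1\<^sub>m n) = 1\<^sub>m (m * n)"
proof (rule eq_matI)
  fix i j assume "i < dim_row (1\<^sub>m (m * n))" "j < dim_col (1\<^sub>m (m * n))"
  then have "i < m * n" "j < m * n" by auto
  then show "kron (1\<^sub>m m) (1\<^sub>m n) $$ (i, j) = 1\<^sub>m (m * n) $$ (i, j)"
    by (auto simp: index_kron less_mult_div_mod) (metis div_mult_mod_eq)
qed auto

lemma adj_kron_mult_kron:
  assumes J: "J \<in> carrier_mat n m" and A: "A \<in> carrier_mat n n" and B: "B \<in> carrier_mat n n"
  shows "adj (kron J J) * kron A B * kron J J = kron (adj J * A * J) (adj J * B * J)"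
proof -
  have J': "adj J \<in> carrier_mat m n" using J by simp
  have AJ: "adj J * A \<in> carrier_mat m n" "adj J * B \<in> carrier_mat m n" using J' A B by auto
  show ?thesis
    by (simp add: adj_kron kron_mult[OF J' A J' B] kron_mult[OF AJ(1) J AJ(2) J])
qed

section \<open>Direct sums and mixtures of models\<close>

lemma is_density_conj_isometry:
  assumes W: "is_density m W" and V: "V \<in> carrier_mat n m" and iso: "adj V * V = 1\<^sub>m m"
  shows "is_density n (V * W * adj V)"
proof -
  have W': "W \<in> carrier_mat m m" using W by (simp add: is_density_def)
  have V': "adj V \<in> carrier_mat m n" using V by simp
  have quad: "((V * W * adj V) *\<^sub>v v) \<bullet>c v = (W *\<^sub>v (adj V *\<^sub>v v)) \<bullet>c (adj V *\<^sub>v v)"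
    if v: "v \<in> carrier_vec n" for v
  proof -
    have u: "adj V *\<^sub>v v \<in> carrier_vec m" using V' v by (rule mult_mat_vec_carrier)
    have "(V * W * adj V) *\<^sub>v v = (V * W) *\<^sub>v (adj V *\<^sub>v v)"
      using V V' W' v by (intro assoc_mult_mat_vec) auto
    also have "\<dots> = V *\<^sub>v (W *\<^sub>v (adj V *\<^sub>v v))"
      using V W' u by (intro assoc_mult_mat_vec) auto
    finally show ?thesis using V W' u v by (simp add: scalar_prod_adj)
  qed
  have "mtrace (V * W * adj V) = mtrace (adj V * V * W)"
    using V V' W' by (simp add: mtrace_mult_comm[of "V * W" n m] assoc_mult_mat[of "adj V" m n])
  then have "mtrace (V * W * adj V) = mtrace W"
    using W' by (simp add: iso)
  with W V mult_mat_vec_carrier[OF V'] show ?thesis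
    by (auto simp: is_density_def quad)
qed

lemma is_density_convex:
  assumes W1: "is_density n W1" and W2: "is_density n W2" and t: "0 \<le> t" "t \<le> 1"
  shows "is_density n (complex_of_real t \<cdot>\<^sub>m W1 + complex_of_real (1 - t) \<cdot>\<^sub>m W2)"
proof -
  have c: "W1 \<in> carrier_mat n n" "W2 \<in> carrier_mat n n" using W1 W2 by (auto simp: is_density_def)
  have "mtrace (complex_of_real t \<cdot>\<^sub>m W1 + complex_of_real (1 - t) \<cdot>\<^sub>m W2) = 1"
    using c W1 W2 by (simp add: mtrace_add[of _ n] mtrace_smult[of _ n] is_density_def)
  with W1 W2 t c show ?thesis
    by (auto simp: is_density_def quadratic_form_lincomb simp del: of_real_diff)
qed

definition embed_mat :: "nat \<Rightarrow> nat \<Rightarrow> (nat \<Rightarrow> nat) \<Rightarrow> complex mat" where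
  "embed_mat n m f = Matrix.mat n m (\<lambda>(k, i). if k = f i then 1 else 0)"

lemma embed_mat_carrier_mat[simp]: "embed_mat n m f \<in> carrier_mat n m"
  by (simp add: embed_mat_def)

lemma index_embed_mat[simp]:
  "k < n \<Longrightarrow> i < m \<Longrightarrow> embed_mat n m f $$ (k, i) = (if k = f i then 1 else 0)"
  "dim_row (embed_mat n m f) = n" "dim_col (embed_mat n m f) = m"
  by (simp_all add: embed_mat_def)

lemma compress_embed_mat:
  assumes f: "\<And>i. i < m \<Longrightarrow> f i < n" and M: "M \<in> carrier_mat n n"
  shows "adj (embed_mat n m f) * M * embed_mat n m f = Matrix.mat m m (\<lambda>(i, j). M $$ (f i, f j))"
proof (rule eq_matI)
  fix i j assume "i < dim_row (Matrix.mat m m (\<lambda>(i, j). M $$ (f i, f j)))"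
    "j < dim_col (Matrix.mat m m (\<lambda>(i, j). M $$ (f i, f j)))"
  then have i: "i < m" and j: "j < m" by auto
  have row: "(adj (embed_mat n m f) * M) $$ (i, l) = M $$ (f i, l)" if "l < n" for l
    using i M f[OF i] that
    by (simp add: scalar_prod_def if_distrib[of cnj] if_distrib[of "\<lambda>x. x * _"] cong: if_cong)
  have "(adj (embed_mat n m f) * M * embed_mat n m f) $$ (i, j)
      = (\<Sum>l<n. (adj (embed_mat n m f) * M) $$ (i, l) * (if l = f j then 1 else 0))"
    using i j M by (simp add: scalar_prod_def atLeast0LessThan)
  also have "\<dots> = M $$ (f i, f j)"
    using f[OF j] by (simp add: row if_distrib[of "\<lambda>x. _ * x"] cong: if_cong)
  finally show "(adj (embed_mat n m f) * M * embed_mat n m f) $$ (i, j)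
      = Matrix.mat m m (\<lambda>(i, j). M $$ (f i, f j)) $$ (i, j)"
    using i j by simp
qed (use M in auto)

lemma adj_embed_mat_isometry:
  assumes "\<And>i. i < m \<Longrightarrow> f i < n" "inj_on f {..<m}"
  shows "adj (embed_mat n m f) * embed_mat n m f = 1\<^sub>m m"
proof -
  have "adj (embed_mat n m f) * embed_mat n m f = adj (embed_mat n m f) * 1\<^sub>m n * embed_mat n m f"
    by (subst right_mult_one_mat[of _ m n]) auto
  also have "\<dots> = Matrix.mat m m (\<lambda>(i, j). 1\<^sub>m n $$ (f i, f j))"
    using assms(1) one_carrier_mat by (rule compress_embed_mat)
  also have "\<dots> = 1\<^sub>m m"
    using assms by (auto simp: inj_on_def)
  finally show ?thesis .
qed

definition block_diag :: "'a::zero mat \<Rightarrow> 'a mat \<Rightarrow> 'a mat" where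
  "block_diag A B = four_block_mat A (0\<^sub>m (dim_row A) (dim_col B)) (0\<^sub>m (dim_row B) (dim_col A)) B"

lemma block_diag_carrier_mat[simp]:
  "A \<in> carrier_mat n n \<Longrightarrow> B \<in> carrier_mat m m \<Longrightarrow>
   block_diag A B \<in> carrier_mat (n + m) (n + m)"
  by (simp add: block_diag_def)

lemma block_diag_dims[simp]:
  "dim_row (block_diag A B) = dim_row A + dim_row B" "dim_col (block_diag A B) = dim_col A + dim_col B"
  by (simp_all add: block_diag_def)

lemma block_diag_one: "block_diag (1\<^sub>m n) (1\<^sub>m m) = 1\<^sub>m (n + m)"
  by (simp add: block_diag_def)

lemma block_diag_mult:
  fixes A :: "'a::semiring_0 mat"
  assumes "A \<in> carrier_mat n n" "A' \<in> carrier_mat n n" "B \<in> carrier_mat m m" "B' \<in> carrier_mat m m"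
  shows "block_diag A B * block_diag A' B' = block_diag (A * A') (B * B')"
  unfolding block_diag_def
  by (subst mult_four_block_mat[OF assms(1) _ _ assms(3) assms(2) _ _ assms(4)]) (use assms in auto)

lemma adj_block_diag:
  assumes "A \<in> carrier_mat n n" "B \<in> carrier_mat m m"
  shows "adj (block_diag A B) = block_diag (adj A) (adj B)"
  by (rule eq_matI) (use assms in \<open>auto simp: block_diag_def\<close>)

lemma is_proj_block_diag: "is_proj n E \<Longrightarrow> is_proj m F \<Longrightarrow> is_proj (n + m) (block_diag E F)"
  unfolding is_proj_def by (auto simp: block_diag_mult adj_block_diag)

lemma compress_block_diag:
  assumes "A \<in> carrier_mat n n" "B \<in> carrier_mat m m"
  shows "adj (embed_mat (n + m) n id) * block_diag A B * embed_mat (n + m) n id = A"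
    and "adj (embed_mat (n + m) m ((+) n)) * block_diag A B * embed_mat (n + m) m ((+) n) = B"
  using assms by (auto simp: compress_embed_mat block_diag_def)

definition lift_state :: "complex mat \<Rightarrow> complex mat \<Rightarrow> complex mat" where
  "lift_state J W = kron J J * W * adj (kron J J)"

lemma is_density_lift_state:
  assumes "is_density (m * m) W" "J \<in> carrier_mat n m" "adj J * J = 1\<^sub>m m"
  shows "is_density (n * n) (lift_state J W)"
proof -
  have "adj (kron J J) * kron J J = 1\<^sub>m (m * m)"
    using assms(2,3) by (simp add: adj_kron kron_mult[of _ m n _ m _ m n] kron_one)
  then show ?thesis
    unfolding lift_state_def using assms(1,2) by (intro is_density_conj_isometry) auto
qed

lemma mtrace_lift_state_kron:
  assumes J: "J \<in> carrier_mat n m" and W: "W \<in> carrier_mat (m * m) (m * m)"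
    and A: "A \<in> carrier_mat n n" and B: "B \<in> carrier_mat n n"
  shows "mtrace (lift_state J W * kron A B) = mtrace (W * kron (adj J * A * J) (adj J * B * J))"
proof -
  let ?K = "kron J J" and ?X = "kron A B"
  have K: "?K \<in> carrier_mat (n * n) (m * m)" and K': "adj ?K \<in> carrier_mat (m * m) (n * n)"
    and X: "?X \<in> carrier_mat (n * n) (n * n)"
    using J A B by auto
  have KW: "?K * W \<in> carrier_mat (n * n) (m * m)" using K W by (rule mult_carrier_mat)
  have KX: "adj ?K * ?X \<in> carrier_mat (m * m) (n * n)" using K' X by (rule mult_carrier_mat)
  have "mtrace (?K * W * adj ?K * ?X) = mtrace ((?K * W) * (adj ?K * ?X))"
    by (simp add: assoc_mult_mat[OF KW K' X])
  also have "\<dots> = mtrace ((adj ?K * ?X) * (?K * W))"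
    using KW KX by (rule mtrace_mult_comm)
  also have "\<dots> = mtrace ((adj ?K * ?X * ?K) * W)"
    by (simp add: assoc_mult_mat[OF KX K W])
  also have "\<dots> = mtrace (W * (adj ?K * ?X * ?K))"
    using KX K W by (intro mtrace_mult_comm) auto
  finally show ?thesis
    using J A B by (simp add: lift_state_def adj_kron_mult_kron)
qed

abbreviation inl_mat :: "nat \<Rightarrow> nat \<Rightarrow> complex mat" where
  "inl_mat d1 d2 \<equiv> embed_mat (d1 + d2) d1 id"

abbreviation inr_mat :: "nat \<Rightarrow> nat \<Rightarrow> complex mat" where
  "inr_mat d1 d2 \<equiv> embed_mat (d1 + d2) d2 ((+) d1)"

definition mix_state :: "real \<Rightarrow> nat \<Rightarrow> nat \<Rightarrow> complex mat \<Rightarrow> complex mat \<Rightarrow> complex mat" where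
  "mix_state t d1 d2 W1 W2 = complex_of_real t \<cdot>\<^sub>m lift_state (inl_mat d1 d2) W1
     + complex_of_real (1 - t) \<cdot>\<^sub>m lift_state (inr_mat d1 d2) W2"

lemma is_density_mix_state:
  assumes "is_density (d1 * d1) W1" "is_density (d2 * d2) W2" "0 \<le> t" "t \<le> 1"
  shows "is_density ((d1 + d2) * (d1 + d2)) (mix_state t d1 d2 W1 W2)"
  unfolding mix_state_def using assms
  by (intro is_density_convex is_density_lift_state) (auto simp: adj_embed_mat_isometry)

lemma mtrace_mix_state_kron:
  assumes "A1 \<in> carrier_mat d1 d1" "B1 \<in> carrier_mat d1 d1" "W1 \<in> carrier_mat (d1 * d1) (d1 * d1)"
    and "A2 \<in> carrier_mat d2 d2" "B2 \<in> carrier_mat d2 d2" "W2 \<in> carrier_mat (d2 * d2) (d2 * d2)"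
  shows "mtrace (mix_state t d1 d2 W1 W2 * kron (block_diag A1 A2) (block_diag B1 B2))
    = complex_of_real t * mtrace (W1 * kron A1 B1) + complex_of_real (1 - t) * mtrace (W2 * kron A2 B2)"
proof -
  let ?d = "d1 + d2"
  have lift: "lift_state (inl_mat d1 d2) W1 \<in> carrier_mat (?d * ?d) (?d * ?d)"
    "lift_state (inr_mat d1 d2) W2 \<in> carrier_mat (?d * ?d) (?d * ?d)"
    "kron (block_diag A1 A2) (block_diag B1 B2) \<in> carrier_mat (?d * ?d) (?d * ?d)"
    using assms by (auto simp: lift_state_def)
  have "mtrace (lift_state (inl_mat d1 d2) W1 * kron (block_diag A1 A2) (block_diag B1 B2))
      = mtrace (W1 * kron A1 B1)"
    using assms by (simp add: mtrace_lift_state_kron[of _ ?d d1] compress_block_diag)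
  moreover have "mtrace (lift_state (inr_mat d1 d2) W2 * kron (block_diag A1 A2) (block_diag B1 B2))
      = mtrace (W2 * kron A2 B2)"
    using assms by (simp add: mtrace_lift_state_kron[of _ ?d d2] compress_block_diag)
  ultimately show ?thesis
    unfolding mix_state_def by (simp add: mtrace_lincomb_mult[OF lift])
qed

section \<open>Convexity of \<open>bell(n)\<close>\<close>

definition bell_model ::
    "nat \<Rightarrow> real mat \<Rightarrow> nat \<Rightarrow> (nat \<Rightarrow> complex mat) \<Rightarrow> (nat \<Rightarrow> complex mat) \<Rightarrow>
     complex mat \<Rightarrow> bool" where
  "bell_model n p d E F W \<longleftrightarrow>
     (\<forall>i\<in>{1..n}. is_proj d (E i) \<and> is_proj d (F i)) \<and> is_density (d * d) W \<and>
     (\<forall>i\<in>{1..n}. complex_of_real (p $$ (i, 0)) = mtrace (W * kron (E i) (1\<^sub>m d))) \<and>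
     (\<forall>j\<in>{1..n}. complex_of_real (p $$ (0, j)) = mtrace (W * kron (1\<^sub>m d) (F j))) \<and>
     (\<forall>i\<in>{1..n}. \<forall>j\<in>{1..n}. complex_of_real (p $$ (i, j)) = mtrace (W * kron (E i) (F j)))"

lemma bell_iff:
  "p \<in> bell n \<longleftrightarrow>
     p \<in> carrier_mat (n+1) (n+1) \<and> p $$ (0, 0) = 1 \<and> (\<exists>d E F W. bell_model n p d E F W)"
  by (simp add: bell_def bell_model_def)

lemma bell_model_mix:
  assumes p: "p \<in> carrier_mat (n+1) (n+1)" "bell_model n p d1 E1 F1 W1"
    and q: "q \<in> carrier_mat (n+1) (n+1)" "bell_model n q d2 E2 F2 W2"
    and t: "0 \<le> t" "t \<le> 1"
  shows "bell_model n (t \<cdot>\<^sub>m p + (1 - t) \<cdot>\<^sub>m q) (d1 + d2)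
    (\<lambda>i. block_diag (E1 i) (E2 i)) (\<lambda>j. block_diag (F1 j) (F2 j)) (mix_state t d1 d2 W1 W2)"
proof -
  have "\<And>i. i \<in> {1..n} \<Longrightarrow> E1 i \<in> carrier_mat d1 d1 \<and> F1 i \<in> carrier_mat d1 d1
      \<and> E2 i \<in> carrier_mat d2 d2 \<and> F2 i \<in> carrier_mat d2 d2"
    and "W1 \<in> carrier_mat (d1 * d1) (d1 * d1)" "W2 \<in> carrier_mat (d2 * d2) (d2 * d2)"
    using p(2) q(2) by (auto simp: bell_model_def is_proj_def is_density_def)
  moreover have "complex_of_real ((t \<cdot>\<^sub>m p + (1 - t) \<cdot>\<^sub>m q) $$ (i, j)) =
      complex_of_real t * complex_of_real (p $$ (i, j)) + complex_of_real (1 - t) * complex_of_real (q $$ (i, j))"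
    if "i \<le> n" "j \<le> n" for i j
    using p(1) q(1) that by simp
  \<comment> \<open>rewriting \<open>1\<^sub>m (d1 + d2)\<close> into \<open>block_diag (1\<^sub>m d1) (1\<^sub>m d2)\<close> lets the marginals use the
      same trace identity as the joint probabilities\<close>
  ultimately show ?thesis
    using p(2) q(2) t
    by (simp add: bell_model_def is_proj_block_diag is_density_mix_state mtrace_mix_state_kron
        flip: block_diag_one)
qed

lemma convex_bell: "convex_mat_set (bell n)"
  unfolding convex_mat_set_def
proof (intro ballI allI impI)
  fix p q and t :: real assume "p \<in> bell n" "q \<in> bell n" and t: "0 \<le> t \<and> t \<le> 1"
  then obtain d1 E1 F1 W1 d2 E2 F2 W2
    where p: "p \<in> carrier_mat (n+1) (n+1)" "p $$ (0, 0) = 1" "bell_model n p d1 E1 F1 W1"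
      and q: "q \<in> carrier_mat (n+1) (n+1)" "q $$ (0, 0) = 1" "bell_model n q d2 E2 F2 W2"
    unfolding bell_iff by blast
  have "bell_model n (t \<cdot>\<^sub>m p + (1 - t) \<cdot>\<^sub>m q) (d1 + d2)
      (\<lambda>i. block_diag (E1 i) (E2 i)) (\<lambda>j. block_diag (F1 j) (F2 j)) (mix_state t d1 d2 W1 W2)"
    using t by (intro bell_model_mix[OF p(1,3) q(1,3)]) auto
  then show "t \<cdot>\<^sub>m p + (1 - t) \<cdot>\<^sub>m q \<in> bell n"
    unfolding bell_iff using p q by auto
qed

section \<open>Meets of commuting projections\<close>

lemma eq_matI_mult_vec:
  fixes A B :: "complex mat"
  assumes "A \<in> carrier_mat n m" "B \<in> carrier_mat n m"
    and "\<And>v. v \<in> carrier_vec m \<Longrightarrow> A *\<^sub>v v = B *\<^sub>v v"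
  shows "A = B"
proof (rule eq_matI)
  fix i j assume "i < dim_row B" "j < dim_col B"
  moreover have "vec_index (A *\<^sub>v unit_vec m j) i = vec_index (B *\<^sub>v unit_vec m j) i"
    using assms(3)[of "unit_vec m j"] by simp
  ultimately show "A $$ (i, j) = B $$ (i, j)" using assms(1,2) by simp
qed (use assms in auto)

lemma is_proj_fixed_vectors_unique:
  assumes R1: "is_proj d R1" and R2: "is_proj d R2"
    and fixed: "\<And>v. v \<in> carrier_vec d \<Longrightarrow> R1 *\<^sub>v v = v \<longleftrightarrow> R2 *\<^sub>v v = v"
  shows "R1 = R2"
proof -
  have absorb: "S * R = R" if R: "is_proj d R" and S: "is_proj d S"
    and RS: "\<And>v. v \<in> carrier_vec d \<Longrightarrow> R *\<^sub>v v = v \<Longrightarrow> S *\<^sub>v v = v" for R S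
  proof (rule eq_matI_mult_vec)
    have c: "R \<in> carrier_mat d d" "S \<in> carrier_mat d d" "R * R = R" using R S by (auto simp: is_proj_def)
    show "S * R \<in> carrier_mat d d" "R \<in> carrier_mat d d" using c by auto
    fix v :: "complex Matrix.vec" assume v: "v \<in> carrier_vec d"
    have "R *\<^sub>v (R *\<^sub>v v) = R *\<^sub>v v" using c v by (metis assoc_mult_mat_vec)
    then show "(S * R) *\<^sub>v v = R *\<^sub>v v" using RS[of "R *\<^sub>v v"] c v by auto
  qed
  have "R1 = adj (R2 * R1)" using absorb[OF R1 R2] fixed R1 by (simp add: is_proj_def)
  also have "\<dots> = R1 * R2" using R1 R2 by (simp add: is_proj_def adj_mult[of _ d d _ d])
  also have "\<dots> = R2" using absorb[OF R2 R1] fixed by blast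
  finally show ?thesis .
qed

lemma proj_meet_eqI:
  assumes "is_proj d R" "\<And>v. v \<in> carrier_vec d \<Longrightarrow> R *\<^sub>v v = v \<longleftrightarrow> E *\<^sub>v v = v \<and> F *\<^sub>v v = v"
  shows "proj_meet d E F = R"
  unfolding proj_meet_def
proof (rule the_equality)
  fix R' assume "is_proj d R' \<and> (\<forall>v\<in>carrier_vec d. R' *\<^sub>v v = v \<longleftrightarrow> E *\<^sub>v v = v \<and> F *\<^sub>v v = v)"
  then show "R' = R" using assms by (intro is_proj_fixed_vectors_unique) auto
qed (use assms in auto)

lemma proj_meet_commuting:
  assumes P: "is_proj d P" and Q: "is_proj d Q" and comm: "P * Q = Q * P"
  shows "proj_meet d P Q = P * Q"
proof (rule proj_meet_eqI)
  have c: "P \<in> carrier_mat d d" "Q \<in> carrier_mat d d" and idem: "P * P = P" "Q * Q = Q"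
    and sa: "adj P = P" "adj Q = Q"
    using P Q by (auto simp: is_proj_def)
  have "P * Q * (P * Q) = P * (Q * P) * Q" using c by (simp add: assoc_mult_mat[of _ d d _ d _ d])
  also have "\<dots> = (P * P) * (Q * Q)" using c by (simp add: assoc_mult_mat[of _ d d _ d _ d] flip: comm)
  also have "\<dots> = P * Q" using idem by simp
  finally show "is_proj d (P * Q)"
    using c sa comm by (simp add: is_proj_def adj_mult[of _ d d _ d])
  have PPQ: "P * (P * Q) = P * Q" and QPQ: "Q * (P * Q) = P * Q"
    using c idem by (simp_all add: comm flip: assoc_mult_mat[of _ d d _ d _ d])
  fix v :: "complex Matrix.vec" assume v: "v \<in> carrier_vec d"
  have absorb: "X *\<^sub>v ((P * Q) *\<^sub>v v) = (P * Q) *\<^sub>v v" if "X * (P * Q) = P * Q" "X \<in> carrier_mat d d" for X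
    using that c v by (metis assoc_mult_mat_vec mult_carrier_mat)
  show "(P * Q) *\<^sub>v v = v \<longleftrightarrow> P *\<^sub>v v = v \<and> Q *\<^sub>v v = v"
    using absorb[OF PPQ] absorb[OF QPQ] c v by auto
qed

lemma is_proj_one: "is_proj d (1\<^sub>m d)"
  by (simp add: is_proj_def)

lemma is_proj_kron: "is_proj d E \<Longrightarrow> is_proj d F \<Longrightarrow> is_proj (d * d) (kron E F)"
  by (auto simp: is_proj_def kron_mult adj_kron)

lemma proj_meet_kron:
  assumes E: "is_proj d E" and F: "is_proj d F"
  shows "proj_meet (d * d) (kron E (1\<^sub>m d)) (kron (1\<^sub>m d) F) = kron E F"
proof -
  have c: "E \<in> carrier_mat d d" "F \<in> carrier_mat d d" using E F by (auto simp: is_proj_def)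
  have "kron E (1\<^sub>m d) * kron (1\<^sub>m d) F = kron E F" "kron (1\<^sub>m d) F * kron E (1\<^sub>m d) = kron E F"
    using c by (simp_all add: kron_mult[of _ d d _ d _ d d _ d])
  moreover have "is_proj (d * d) (kron E (1\<^sub>m d))" "is_proj (d * d) (kron (1\<^sub>m d) F)"
    using E F by (auto simp: is_proj_kron is_proj_one)
  ultimately show ?thesis by (metis proj_meet_commuting)
qed

lemma bell_subset_qset: "bell n \<subseteq> qset n"
proof
  fix p assume "p \<in> bell n"
  then obtain d E F W where p: "p \<in> carrier_mat (n+1) (n+1)" "p $$ (0, 0) = 1"
    and proj: "\<forall>i\<in>{1..n}. is_proj d (E i) \<and> is_proj d (F i)" and W: "is_density (d * d) W"
    and p1: "\<forall>i\<in>{1..n}. complex_of_real (p $$ (i, 0)) = mtrace (W * kron (E i) (1\<^sub>m d))"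
    and p2: "\<forall>j\<in>{1..n}. complex_of_real (p $$ (0, j)) = mtrace (W * kron (1\<^sub>m d) (F j))"
    and p3: "\<forall>i\<in>{1..n}. \<forall>j\<in>{1..n}. complex_of_real (p $$ (i, j)) = mtrace (W * kron (E i) (F j))"
    unfolding bell_iff bell_model_def by blast
  have "\<forall>i\<in>{1..n}. is_proj (d * d) (kron (E i) (1\<^sub>m d)) \<and> is_proj (d * d) (kron (1\<^sub>m d) (F i))"
    using proj by (simp add: is_proj_kron is_proj_one)
  moreover have "\<forall>i\<in>{1..n}. \<forall>j\<in>{1..n}. complex_of_real (p $$ (i, j))
      = mtrace (W * proj_meet (d * d) (kron (E i) (1\<^sub>m d)) (kron (1\<^sub>m d) (F j)))"
    using p3 proj by (simp add: proj_meet_kron)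
  ultimately show "p \<in> qset n"
    unfolding qset_def mem_Collect_eq using p p1 p2 W
    by (intro conjI exI[of _ "d * d"] exI[of _ "\<lambda>i. kron (E i) (1\<^sub>m d)"]
          exI[of _ "\<lambda>j. kron (1\<^sub>m d) (F j)"] exI[of _ W])
qed

section \<open>Classical correlations\<close>

lemma convex_mat_set_sum:
  assumes S: "convex_mat_set S" "S \<subseteq> carrier_mat N N"
    and V: "finite V" "V \<noteq> {}" and g: "\<forall>v\<in>V. g v \<in> S"
    and w: "\<forall>v\<in>V. w v \<ge> 0" "sum w V = 1"
  shows "Matrix.mat N N (\<lambda>(i, j). \<Sum>v\<in>V. w v * g v $$ (i, j)) \<in> S"
  using V g w
proof (induction V arbitrary: w rule: finite_ne_induct)
  case (singleton x)
  have "Matrix.mat N N (\<lambda>(i, j). \<Sum>v\<in>{x}. w v * g v $$ (i, j)) = g x"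
    using singleton S(2) by (intro eq_matI) auto
  then show ?case using singleton by simp
next
  case (insert x F)
  let ?p = "Matrix.mat N N (\<lambda>(i, j). \<Sum>v\<in>insert x F. w v * g v $$ (i, j))"
  have wF: "sum w F = 1 - w x" and wF_nonneg: "\<forall>v\<in>F. w v \<ge> 0" and gx: "g x \<in> S"
    using insert by auto
  have gx_carrier: "g x \<in> carrier_mat N N" using gx S(2) by auto
  show ?case
  proof (cases "w x = 1")
    case True
    then have "sum w F = 0" using wF by simp
    then have "\<forall>v\<in>F. w v = 0" using sum_nonneg_eq_0_iff[OF insert.hyps(1)] wF_nonneg by blast
    then have "?p = g x" using True insert.hyps gx_carrier by auto
    then show ?thesis using gx by (simp only:)
  next
    case False
    have "0 \<le> sum w F" using wF_nonneg by (simp add: sum_nonneg)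
    then have "w x \<le> 1" using wF by linarith
    then have pos: "1 - w x > 0" using False by simp
    let ?q = "Matrix.mat N N (\<lambda>(i, j). \<Sum>v\<in>F. w v / (1 - w x) * g v $$ (i, j))"
    have "?q \<in> S"
      using insert pos wF by (intro insert.IH) (auto simp flip: sum_divide_distrib)
    then have "w x \<cdot>\<^sub>m g x + (1 - w x) \<cdot>\<^sub>m ?q \<in> S"
      using S(1) gx insert.prems(2) pos unfolding convex_mat_set_def by auto
    moreover have "?p = w x \<cdot>\<^sub>m g x + (1 - w x) \<cdot>\<^sub>m ?q"
      using insert.hyps gx_carrier pos by (intro eq_matI) (auto simp: sum_distrib_left)
    ultimately show ?thesis by (simp only:)
  qed
qed

definition bool_mat :: "bool \<Rightarrow> complex mat" where
  "bool_mat b = Matrix.mat 1 1 (\<lambda>_. of_bool b)"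

lemma is_proj_bool_mat: "is_proj 1 (bool_mat b)"
  by (auto simp: is_proj_def bool_mat_def scalar_prod_def)

lemma bool_mat_True: "bool_mat True = 1\<^sub>m 1"
  by (auto simp: bool_mat_def)

lemma is_density_bool_mat_True: "is_density 1 (bool_mat True)"
  by (auto simp: is_density_def bool_mat_def mtrace_def scalar_prod_def)

lemma mtrace_kron_bool_mat: "mtrace (bool_mat c * kron (bool_mat a) (bool_mat b)) = of_bool (c \<and> a \<and> b)"
  by (simp add: mtrace_def bool_mat_def index_kron scalar_prod_def)

text \<open>The table of the model in which \<open>A\<^sub>i\<close> occurs iff \<open>i \<in> S\<close> and \<open>B\<^sub>j\<close> iff \<open>j \<in> T\<close>;
  row and column \<open>0\<close> belong to the sure event.\<close>
definition deterministic_mat :: "nat \<Rightarrow> nat set \<Rightarrow> nat set \<Rightarrow> real mat" where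
  "deterministic_mat n S T =
     Matrix.mat (n+1) (n+1) (\<lambda>(i, j). of_bool ((i = 0 \<or> i \<in> S) \<and> (j = 0 \<or> j \<in> T)))"

lemma deterministic_mat_in_bell: "deterministic_mat n S T \<in> bell n"
proof -
  have "bell_model n (deterministic_mat n S T) 1 (\<lambda>i. bool_mat (i \<in> S)) (\<lambda>j. bool_mat (j \<in> T)) (bool_mat True)"
    unfolding bell_model_def bool_mat_True[symmetric]
    using is_proj_bool_mat is_density_bool_mat_True
    by (simp add: deterministic_mat_def mtrace_kron_bool_mat)
  then show ?thesis
    unfolding bell_iff by (auto simp: deterministic_mat_def)
qed

lemma (in finite_measure) measure_eq_sum_fibres:
  assumes V: "finite V" and f: "\<And>x. x \<in> space M \<Longrightarrow> f x \<in> V"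
    and fibres: "\<And>s. s \<in> V \<Longrightarrow> {x\<in>space M. f x = s} \<in> sets M"
  shows "measure M {x\<in>space M. Q (f x)} = (\<Sum>s\<in>V. measure M {x\<in>space M. f x = s} * of_bool (Q s))"
proof -
  have "{x\<in>space M. Q (f x)} = (\<Union>s\<in>{s\<in>V. Q s}. {x\<in>space M. f x = s})"
    using f by auto
  also have "measure M \<dots> = (\<Sum>s\<in>{s\<in>V. Q s}. measure M {x\<in>space M. f x = s})"
    by (rule finite_measure_finite_Union) (use V fibres in \<open>auto simp: disjoint_family_on_def\<close>)
  also have "\<dots> = (\<Sum>s\<in>V. measure M {x\<in>space M. f x = s} * of_bool (Q s))"
    using V by (simp add: sum.inter_filter of_bool_def if_distrib cong: if_cong)
  finally show ?thesis .
qed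

lemma sets_Collect_occurrence_pattern:
  assumes "finite I" "\<And>i. i \<in> I \<Longrightarrow> A i \<in> sets M"
  shows "{x\<in>space M. {i\<in>I. x \<in> A i} = S} \<in> sets M"
proof -
  have event: "{x\<in>space M. x \<in> A i \<longleftrightarrow> i \<in> S} \<in> sets M" if "i \<in> I" for i
    using assms(2)[OF that] sets.sets_into_space[OF assms(2)[OF that]]
    by (cases "i \<in> S") (auto simp: Int_absorb1 Diff_eq[symmetric])
  have "{x\<in>space M. {i\<in>I. x \<in> A i} = S} = {x\<in>space M. S \<subseteq> I \<and> (\<forall>i\<in>I. x \<in> A i \<longleftrightarrow> i \<in> S)}"
    by auto
  then show ?thesis
    using assms(1) by (auto intro!: sets.sets_Collect_conj sets.sets_Collect_finite_All event)
qed

lemma cset_deterministic_decomposition: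
  assumes "p \<in> cset n TYPE('a)"
  obtains V w where "finite V" "V \<noteq> {}" "\<forall>s\<in>V. w s \<ge> 0" "sum w V = 1"
    and "p = Matrix.mat (n+1) (n+1) (\<lambda>(i, j). \<Sum>s\<in>V. w s * deterministic_mat n (fst s) (snd s) $$ (i, j))"
proof -
  obtain M :: "'a measure" and A B where p: "p \<in> carrier_mat (n+1) (n+1)" "p $$ (0, 0) = 1"
    and "prob_space M" and AB: "\<forall>i\<in>{1..n}. A i \<in> sets M \<and> B i \<in> sets M"
    and pA: "\<forall>i\<in>{1..n}. p $$ (i, 0) = measure M (A i)"
    and pB: "\<forall>j\<in>{1..n}. p $$ (0, j) = measure M (B j)"
    and pAB: "\<forall>i\<in>{1..n}. \<forall>j\<in>{1..n}. p $$ (i, j) = measure M (A i \<inter> B j)"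
    using assms unfolding cset_def by blast
  interpret prob_space M by fact
  define pattern where "pattern x = ({i\<in>{1..n}. x \<in> A i}, {j\<in>{1..n}. x \<in> B j})" for x
  define V where "V = Pow {1..n} \<times> Pow {1..n}"
  define w where "w s = measure M {x\<in>space M. pattern x = s}" for s
  define A' where "A' i = (if i = 0 then space M else A i)" for i
  define B' where "B' j = (if j = 0 then space M else B j)" for j
  have V: "finite V" "V \<noteq> {}" and pattern: "\<And>x. pattern x \<in> V"
    by (auto simp: V_def pattern_def)
  have fibres: "{x\<in>space M. pattern x = s} \<in> sets M" for s
  proof -
    have "{x\<in>space M. pattern x = s} =
        {x\<in>space M. {i\<in>{1..n}. x \<in> A i} = fst s} \<inter> {x\<in>space M. {j\<in>{1..n}. x \<in> B j} = snd s}"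
      by (auto simp: pattern_def prod_eq_iff)
    moreover have "{x\<in>space M. {i\<in>{1..n}. x \<in> A i} = fst s} \<in> sets M"
      and "{x\<in>space M. {j\<in>{1..n}. x \<in> B j} = snd s} \<in> sets M"
      by (intro sets_Collect_occurrence_pattern; use AB in simp)+
    ultimately show ?thesis by simp
  qed
  have entry: "p $$ (i, j) = (\<Sum>s\<in>V. w s * deterministic_mat n (fst s) (snd s) $$ (i, j))"
    if "i < n + 1" "j < n + 1" for i j
  proof -
    have subspace: "A i \<subseteq> space M \<and> B i \<subseteq> space M" if "i \<in> {1..n}" for i
      using AB that sets.sets_into_space by blast
    have events: "A' i \<inter> B' j =
        {x\<in>space M. (i = 0 \<or> i \<in> fst (pattern x)) \<and> (j = 0 \<or> j \<in> snd (pattern x))}"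
      using that subspace[of i] by (auto simp: A'_def B'_def pattern_def)
    have "p $$ (i, j) = measure M (A' i \<inter> B' j)"
      using that p pA pB pAB prob_space subspace
      by (cases "i = 0"; cases "j = 0") (auto simp: A'_def B'_def Int_absorb1 Int_absorb2)
    also have "\<dots> = (\<Sum>s\<in>V. w s * of_bool ((i = 0 \<or> i \<in> fst s) \<and> (j = 0 \<or> j \<in> snd s)))"
      unfolding events w_def using V(1) pattern fibres by (rule measure_eq_sum_fibres)
    finally show ?thesis
      using that by (simp add: deterministic_mat_def)
  qed
  show ?thesis
  proof
    show "\<forall>s\<in>V. w s \<ge> 0" by (simp add: w_def)
    show "sum w V = 1"
      using measure_eq_sum_fibres[OF V(1) pattern fibres, of "\<lambda>_. True"] prob_space by (simp add: w_def)
    show "p = Matrix.mat (n+1) (n+1) (\<lambda>(i, j). \<Sum>s\<in>V. w s * deterministic_mat n (fst s) (snd s) $$ (i, j))"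
      using p entry by auto
  qed (fact V)+
qed

lemma cset_subset_bell: "cset n TYPE('a) \<subseteq> bell n"
proof
  fix p assume "p \<in> cset n TYPE('a)"
  then obtain V w where "finite V" "V \<noteq> {}" "\<forall>s\<in>V. w s \<ge> 0" "sum w V = 1"
    and p: "p = Matrix.mat (n+1) (n+1) (\<lambda>(i, j). \<Sum>s\<in>V. w s * deterministic_mat n (fst s) (snd s) $$ (i, j))"
    by (rule cset_deterministic_decomposition)
  moreover have "bell n \<subseteq> carrier_mat (n+1) (n+1)"
    by (auto simp: bell_def)
  ultimately show "p \<in> bell n"
    using deterministic_mat_in_bell by (simp add: convex_mat_set_sum[OF convex_bell])
qed

theorem theorem1:
  fixes n :: nat
  assumes "n \<ge> 1"
  shows "convex_mat_set (bell n) \<and> bell n \<subseteq> qset n \<and> cset n TYPE('a) \<subseteq> bell n"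
  using convex_bell bell_subset_qset cset_subset_bell by blast

end
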